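(* Fix an integer $r\ge1$ and let $I_r(y)=\sup_{\xi\in\mathbb{R}}\left(y\xi-\varphi^r(\xi)\right)$ for $y\in[0,2^{-r}]$. Then: (1) as $\eta\to0^+$, \[ I_r(\eta)=2\eta\log\left(4^r\eta\sqrt{\Psi^r(0)\prod_{k=1}^{r}\Psi^k(0)}\right)-\log\Psi^r(0)-2\eta+O(\eta^2); \] (2) as $\eta\to0^+$, \[ I_r\left(\frac{1}{2^r}-\eta\right)=2^r\eta\log\left(2^{\,r-1+2^{1-r}}\eta\right)+(2-2^{1-r})\log 2-2^r\eta+O(\eta^2). \] In particular $I_r(0)=-\log\Psi^r(0)$ and $I_r(2^{-r})=(2-2^{1-r})\log 2$.
   Context: $\varphi(\xi)=\frac{\xi}{4}+\log\cosh\frac{\xi}{4}$ for $\xi\in\mathbb{R}$, and $\varphi^r$ is its $r$-fold composition. For $X\in[0,\infty)$, $\Psi(X)=\frac{\sqrt{X}+1}{2}$, and $\Psi^k$ denotes the $k$-fold composition of $\Psi$. ($I_r$ is the rate function in the large deviation principle for $S_{r+1,n}/n$, the normalized number of Strahler-order-$(r+1)$ branches in a uniformly random planar full binary tree with $n$ leaves.) *)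

theory Defs
  imports "HOL-Analysis.Analysis" "HOL-Library.Landau_Symbols"
begin

definition phi :: "real \<Rightarrow> real" where
  "phi \<xi> = \<xi> / 4 + ln (cosh (\<xi> / 4))"

definition Psi :: "real \<Rightarrow> real" where
  "Psi X = (sqrt X + 1) / 2"

definition I :: "nat \<Rightarrow> real \<Rightarrow> real" where
  "I r y = (SUP \<xi>\<in>(UNIV::real set). y * \<xi> - (phi ^^ r) \<xi>)"

end

theory Submission
  imports Defs "HOL-Real_Asymp.Real_Asymp"
begin

text \<open>Since \<open>exp \<circ> phi = Psi \<circ> exp\<close>, the iterate \<open>phi ^^ r\<close> equals \<open>ln \<circ> (Psi ^^ r) \<circ> exp\<close>.
  The substitution \<open>\<xi> = 2 ln t\<close> turns \<open>I r y\<close> into \<open>sup\<close> over \<open>t > 0\<close> of \<open>s ln t - F t\<close> with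
  \<open>s = 2 y\<close> and \<open>F t = ln ((Psi ^^ r) (t\<^sup>2))\<close>; near the other endpoint the substitution
  \<open>\<xi> = - 2 ^ r ln u\<close> gives the same shape with \<open>s = 1 - 2 ^ r y\<close> and
  \<open>F u = ln (u (Psi ^^ r) (u ^ - 2 ^ r))\<close>. In both cases \<open>F\<close> is increasing, grows at least
  logarithmically and has a first-order expansion \<open>F t = a0 + a1 t + O(t\<^sup>2)\<close> at \<open>0\<close>, obtained by
  iterating \<open>sqrt (c + d t) = sqrt c + d t / (2 sqrt c) + O(t\<^sup>2)\<close>. For such \<open>F\<close> the supremum is
  attained near \<open>t = s / a1\<close> and equals \<open>s ln (s / a1) - s - a0 + O(s\<^sup>2)\<close> as \<open>s \<rightarrow> 0\<close>, while at
  \<open>s = 0\<close> it is \<open>- a0\<close>.\<close>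

section \<open>First-order expansions on the unit interval\<close>

definition linear_approx :: "(real \<Rightarrow> real) \<Rightarrow> real \<Rightarrow> real \<Rightarrow> bool" where
  "linear_approx g c d \<longleftrightarrow> (\<exists>M. \<forall>t\<in>{0..1}. \<bar>g t - c - d * t\<bar> \<le> M * t\<^sup>2)"

lemma linear_approxI:
  assumes "\<And>t. 0 \<le> t \<Longrightarrow> t \<le> 1 \<Longrightarrow> \<bar>g t - c - d * t\<bar> \<le> M * t\<^sup>2"
  shows "linear_approx g c d"
  unfolding linear_approx_def by (intro exI[of _ M] ballI) (use assms in auto)

lemma linear_approx_bound:
  assumes "linear_approx g c d"
  shows "\<exists>M\<ge>0. \<forall>t. 0 \<le> t \<longrightarrow> t \<le> 1 \<longrightarrow> \<bar>g t - c - d * t\<bar> \<le> M * t\<^sup>2"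
proof -
  obtain M where M: "\<forall>t\<in>{0..1}. \<bar>g t - c - d * t\<bar> \<le> M * t\<^sup>2"
    using assms unfolding linear_approx_def by blast
  moreover have "M \<ge> 0" using M[rule_format, of 1] by simp
  ultimately show ?thesis by auto
qed

lemma linear_approx_at_0:
  assumes "linear_approx g c d"
  shows "g 0 = c"
proof -
  obtain M where "M \<ge> 0" "\<And>t. 0 \<le> t \<Longrightarrow> t \<le> 1 \<Longrightarrow> \<bar>g t - c - d * t\<bar> \<le> M * t\<^sup>2"
    using linear_approx_bound[OF assms] by blast
  from this(2)[of 0] show ?thesis by simp
qed

lemma abs_diff_le_of_quadratic_remainder:
  fixes x c d t M :: real
  assumes "0 \<le> M" "0 \<le> t" "t \<le> 1" "\<bar>x - c - d * t\<bar> \<le> M * t\<^sup>2"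
  shows "\<bar>x - c\<bar> \<le> (\<bar>d\<bar> + M) * t"
proof -
  have "t\<^sup>2 \<le> t" using assms by (simp add: power2_eq_square mult_left_le)
  hence "M * t\<^sup>2 \<le> M * t" using assms(1) by (rule mult_left_mono)
  moreover have "\<bar>d * t\<bar> = \<bar>d\<bar> * t" using assms by (simp add: abs_mult)
  ultimately show ?thesis using assms(4) by (simp add: abs_le_iff algebra_simps) linarith
qed

lemma linear_approx_affine:
  assumes "linear_approx g c d"
  shows "linear_approx (\<lambda>t. \<alpha> * g t + \<beta> + \<gamma> * t) (\<alpha> * c + \<beta>) (\<alpha> * d + \<gamma>)"
proof -
  obtain M where M: "\<And>t. 0 \<le> t \<Longrightarrow> t \<le> 1 \<Longrightarrow> \<bar>g t - c - d * t\<bar> \<le> M * t\<^sup>2"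
    using linear_approx_bound[OF assms] by auto
  have "\<bar>\<alpha> * g t + \<beta> + \<gamma> * t - (\<alpha> * c + \<beta>) - (\<alpha> * d + \<gamma>) * t\<bar> \<le> (\<bar>\<alpha>\<bar> * M) * t\<^sup>2"
    if "0 \<le> t" "t \<le> 1" for t
  proof -
    have "\<alpha> * g t + \<beta> + \<gamma> * t - (\<alpha> * c + \<beta>) - (\<alpha> * d + \<gamma>) * t = \<alpha> * (g t - c - d * t)"
      by (simp add: algebra_simps)
    hence "\<bar>\<alpha> * g t + \<beta> + \<gamma> * t - (\<alpha> * c + \<beta>) - (\<alpha> * d + \<gamma>) * t\<bar> = \<bar>\<alpha>\<bar> * \<bar>g t - c - d * t\<bar>"
      by (simp add: abs_mult)
    also have "\<dots> \<le> \<bar>\<alpha>\<bar> * (M * t\<^sup>2)" using M[OF that] by (rule mult_left_mono) simp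
    finally show ?thesis by (simp add: mult.assoc)
  qed
  thus ?thesis by (rule linear_approxI)
qed

lemma linear_approx_square_arg:
  assumes "linear_approx g c d"
  shows "linear_approx (\<lambda>t. g (t\<^sup>2)) c 0"
proof -
  obtain M where M: "M \<ge> 0" "\<And>t. 0 \<le> t \<Longrightarrow> t \<le> 1 \<Longrightarrow> \<bar>g t - c - d * t\<bar> \<le> M * t\<^sup>2"
    using linear_approx_bound[OF assms] by blast
  have "\<bar>g (t\<^sup>2) - c - 0 * t\<bar> \<le> (\<bar>d\<bar> + M) * t\<^sup>2" if "0 \<le> t" "t \<le> 1" for t
  proof -
    have t2: "0 \<le> t\<^sup>2" "t\<^sup>2 \<le> 1" using that by (auto simp: power_le_one)
    have "\<bar>g (t\<^sup>2) - c\<bar> \<le> (\<bar>d\<bar> + M) * t\<^sup>2"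
      using M(1) t2 M(2)[OF t2] by (rule abs_diff_le_of_quadratic_remainder)
    thus ?thesis by simp
  qed
  thus ?thesis by (rule linear_approxI)
qed

lemma sqrt_linearization_error:
  fixes x c :: real
  assumes "0 \<le> x" "0 < c"
  shows "\<bar>sqrt x - sqrt c - (x - c) / (2 * sqrt c)\<bar> \<le> (x - c)\<^sup>2 / (2 * c * sqrt c)"
proof -
  define a b where "a = sqrt x" and "b = sqrt c"
  have a: "a \<ge> 0" and b: "b > 0" using assms by (auto simp: a_def b_def)
  have x: "x = a\<^sup>2" and c: "c = b\<^sup>2" using assms by (auto simp: a_def b_def)
  have "sqrt x - sqrt c - (x - c) / (2 * sqrt c) = - ((a - b)\<^sup>2 / (2 * b))"
    unfolding x c using a b by (simp add: field_simps power2_eq_square)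
  hence "\<bar>sqrt x - sqrt c - (x - c) / (2 * sqrt c)\<bar> = (a - b)\<^sup>2 / (2 * b)"
    using b by simp
  also have "\<dots> = (a - b)\<^sup>2 * b\<^sup>2 / (2 * b ^ 3)"
    using b by (simp add: power2_eq_square power3_eq_cube)
  also have "\<dots> \<le> (a - b)\<^sup>2 * (a + b)\<^sup>2 / (2 * b ^ 3)"
    using a b by (intro divide_right_mono mult_left_mono power_mono) auto
  also have "\<dots> = (x - c)\<^sup>2 / (2 * c * sqrt c)"
    unfolding x c using a b by (simp add: field_simps power2_eq_square power3_eq_cube)
  finally show ?thesis .
qed

lemma linear_approx_sqrt:
  assumes "linear_approx g c d" "c > 0" "\<And>t. 0 \<le> t \<Longrightarrow> t \<le> 1 \<Longrightarrow> 0 \<le> g t"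
  shows "linear_approx (\<lambda>t. sqrt (g t)) (sqrt c) (d / (2 * sqrt c))"
proof -
  obtain M where M: "M \<ge> 0" "\<And>t. 0 \<le> t \<Longrightarrow> t \<le> 1 \<Longrightarrow> \<bar>g t - c - d * t\<bar> \<le> M * t\<^sup>2"
    using linear_approx_bound[OF assms(1)] by blast
  have sc: "sqrt c > 0" using \<open>c > 0\<close> by simp
  define M' where "M' = (\<bar>d\<bar> + M)\<^sup>2 / (2 * c * sqrt c) + M / (2 * sqrt c)"
  have "\<bar>sqrt (g t) - sqrt c - d / (2 * sqrt c) * t\<bar> \<le> M' * t\<^sup>2" if t: "0 \<le> t" "t \<le> 1" for t
  proof -
    have "\<bar>g t - c\<bar> \<le> (\<bar>d\<bar> + M) * t"
      using M t by (intro abs_diff_le_of_quadratic_remainder) auto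
    hence "\<bar>g t - c\<bar>\<^sup>2 \<le> ((\<bar>d\<bar> + M) * t)\<^sup>2" by (intro power_mono) auto
    hence "(g t - c)\<^sup>2 \<le> ((\<bar>d\<bar> + M) * t)\<^sup>2" by simp
    hence quad: "(g t - c)\<^sup>2 / (2 * c * sqrt c) \<le> (\<bar>d\<bar> + M)\<^sup>2 / (2 * c * sqrt c) * t\<^sup>2"
      using \<open>c > 0\<close> by (simp add: divide_right_mono power_mult_distrib)
    have lin: "\<bar>(g t - c - d * t) / (2 * sqrt c)\<bar> \<le> M / (2 * sqrt c) * t\<^sup>2"
      using M(2)[OF t] sc by (simp add: divide_right_mono)
    have "sqrt (g t) - sqrt c - d / (2 * sqrt c) * t
        = (sqrt (g t) - sqrt c - (g t - c) / (2 * sqrt c)) + (g t - c - d * t) / (2 * sqrt c)"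
      using sc by (simp add: field_simps)
    hence "\<bar>sqrt (g t) - sqrt c - d / (2 * sqrt c) * t\<bar>
        \<le> \<bar>sqrt (g t) - sqrt c - (g t - c) / (2 * sqrt c)\<bar> + \<bar>(g t - c - d * t) / (2 * sqrt c)\<bar>"
      by (simp only: abs_triangle_ineq)
    moreover have "M' * t\<^sup>2 = (\<bar>d\<bar> + M)\<^sup>2 / (2 * c * sqrt c) * t\<^sup>2 + M / (2 * sqrt c) * t\<^sup>2"
      by (simp add: M'_def algebra_simps)
    ultimately show ?thesis
      using sqrt_linearization_error[OF assms(3)[OF t] \<open>c > 0\<close>] quad lin by linarith
  qed
  thus ?thesis by (rule linear_approxI)
qed

lemma ln_one_plus_ge:
  fixes y :: real
  assumes "0 \<le> y"
  shows "y - y\<^sup>2 \<le> ln (1 + y)"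
proof (cases "y \<le> 1")
  case True
  thus ?thesis using assms by (rule ln_one_plus_pos_lower_bound[rotated])
next
  case False
  hence "y - y\<^sup>2 \<le> 0" by (simp add: power2_eq_square mult_le_cancel_left1)
  also have "0 \<le> ln (1 + y)" using assms by simp
  finally show ?thesis .
qed

lemma linear_approx_ln:
  assumes "linear_approx g c d" "c > 0" "\<And>t. 0 \<le> t \<Longrightarrow> t \<le> 1 \<Longrightarrow> c \<le> g t"
  shows "linear_approx (\<lambda>t. ln (g t)) (ln c) (d / c)"
proof -
  obtain M where M: "M \<ge> 0" "\<And>t. 0 \<le> t \<Longrightarrow> t \<le> 1 \<Longrightarrow> \<bar>g t - c - d * t\<bar> \<le> M * t\<^sup>2"
    using linear_approx_bound[OF assms(1)] by blast
  define M' where "M' = M / c + ((\<bar>d\<bar> + M) / c)\<^sup>2"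
  have "\<bar>ln (g t) - ln c - d / c * t\<bar> \<le> M' * t\<^sup>2" if t: "0 \<le> t" "t \<le> 1" for t
  proof -
    define y where "y = (g t - c) / c"
    have y: "0 \<le> y" using assms(2) assms(3)[OF t] by (simp add: y_def)
    have ln_g: "ln (g t) = ln c + ln (1 + y)"
      using assms(2) assms(3)[OF t] by (simp add: y_def field_simps ln_div)
    have lin: "\<bar>y - d / c * t\<bar> \<le> M / c * t\<^sup>2"
      using M(2)[OF t] assms(2)
      by (simp add: y_def diff_divide_distrib[symmetric] divide_right_mono)
    have "\<bar>g t - c\<bar> \<le> (\<bar>d\<bar> + M) * t"
      using M t by (intro abs_diff_le_of_quadratic_remainder) auto
    hence "y \<le> (\<bar>d\<bar> + M) / c * t" using assms(2) by (simp add: y_def divide_right_mono abs_le_iff)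
    hence "y\<^sup>2 \<le> ((\<bar>d\<bar> + M) / c * t)\<^sup>2"
      using y by (intro power_mono)
    hence "y\<^sup>2 \<le> ((\<bar>d\<bar> + M) / c)\<^sup>2 * t\<^sup>2"
      by (simp only: power_mult_distrib)
    moreover have "y - y\<^sup>2 \<le> ln (1 + y)" "ln (1 + y) \<le> y"
      using y by (simp_all add: ln_one_plus_ge ln_add_one_self_le_self)
    ultimately show ?thesis using lin unfolding ln_g M'_def by (simp add: abs_le_iff algebra_simps)
  qed
  thus ?thesis by (rule linear_approxI)
qed

section \<open>A Legendre transform in logarithmic variables\<close>

text \<open>The Legendre transform of \<open>\<xi> \<mapsto> F (exp \<xi>)\<close>, written in the variable \<open>t = exp \<xi>\<close>.\<close>
definition log_legendre :: "(real \<Rightarrow> real) \<Rightarrow> real \<Rightarrow> real" where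
  "log_legendre F s = (SUP t\<in>{0<..}. s * ln t - F t)"

lemma log_legendre_bounds:
  assumes "\<And>t. 0 < t \<Longrightarrow> s * ln t - F t \<le> U" and "0 < t" "L \<le> s * ln t - F t"
  shows "L \<le> log_legendre F s" "log_legendre F s \<le> U"
proof -
  have "bdd_above ((\<lambda>t. s * ln t - F t) ` {0<..})"
    using assms(1) by (auto intro!: bdd_aboveI2[of _ _ U])
  thus "L \<le> log_legendre F s"
    unfolding log_legendre_def using assms(2,3) by (intro cSUP_upper2) auto
  show "log_legendre F s \<le> U"
    unfolding log_legendre_def using assms(1) by (intro cSUP_least) auto
qed

lemma mult_ln_sub_linear_le:
  fixes s b t :: real
  assumes "0 < s" "0 < b" "0 < t"
  shows "s * ln t - b * t \<le> s * ln (s / b) - s"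
proof -
  have "ln (b * t / s) \<le> b * t / s - 1" using assms by (intro ln_le_minus_one) auto
  moreover have "ln (b * t / s) = ln t - ln (s / b)" using assms by (simp add: ln_div ln_mult)
  ultimately have "s * (ln t - ln (s / b)) \<le> s * (b * t / s - 1)"
    using assms by (intro mult_left_mono) auto
  thus ?thesis using assms by (simp add: algebra_simps)
qed

lemma ln_le_half_sub_one:
  fixes w :: real
  assumes "8 \<le> w"
  shows "ln w \<le> w / 2 - 1"
proof -
  have "ln (w / 4) \<le> w / 4 - 1" using assms by (intro ln_le_minus_one) auto
  moreover have "ln (w / 4) = ln w - 2 * ln 2"
    using assms ln_realpow[of 2 2] by (simp add: ln_div)
  ultimately show ?thesis using assms ln_2_less_1 by linarith
qed

lemma mult_ln_sub_half_linear_le: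
  fixes s a t :: real
  assumes "0 < s" "0 < a" "8 * s \<le> a * t"
  shows "s * ln t - a / 2 * t \<le> s * ln (s / a) - s"
proof -
  define w where "w = a * t / s"
  have w: "8 \<le> w" using assms by (simp add: w_def field_simps)
  have "0 < a * t" using assms by linarith
  hence "t > 0" using assms by (simp add: zero_less_mult_iff)
  hence "ln t = ln (s / a) + ln w" using assms by (simp add: w_def ln_div ln_mult)
  moreover have "a / 2 * t = s * w / 2" using assms by (simp add: w_def)
  moreover have "s * ln w \<le> s * (w / 2 - 1)"
    using ln_le_half_sub_one[OF w] assms by (intro mult_left_mono) auto
  ultimately show ?thesis by (simp add: algebra_simps)
qed

lemma mult_ln_div_le_add:
  fixes s a b :: real
  assumes "0 < s" "0 < a" "a / 2 \<le> b" "b \<le> a"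
  shows "s * ln (s / b) \<le> s * ln (s / a) + 2 * s * (a - b) / a"
proof -
  have "ln (a / b) \<le> a / b - 1" using assms by (intro ln_le_minus_one) auto
  also have "a / b - 1 = (a - b) / b" using assms by (simp add: diff_divide_distrib)
  also have "\<dots> \<le> (a - b) / (a / 2)" using assms by (intro divide_left_mono) auto
  finally have "s * ln (a / b) \<le> s * ((a - b) / (a / 2))"
    using assms by (intro mult_left_mono) auto
  moreover have "ln (s / b) = ln (s / a) + ln (a / b)" using assms by (simp add: ln_div)
  ultimately show ?thesis by (simp add: algebra_simps)
qed

lemma mult_ln_sub_quadratic_le:
  fixes s t a K :: real
  assumes "0 < s" "0 < t" "0 < a" "0 \<le> K" "K * t \<le> a / 2" "16 * K * s \<le> a\<^sup>2"
  shows "s * ln t - (a * t - K * t\<^sup>2) \<le> s * ln (s / a) - s + 16 * K / a\<^sup>2 * s\<^sup>2"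
proof (cases "K * t \<le> K * (8 * s / a)")
  case True
  define e where "e = K * (8 * s / a)"
  have e: "0 \<le> e" "e \<le> a / 2" using assms by (simp_all add: e_def field_simps power2_eq_square)
  have "K * t\<^sup>2 = K * t * t" by (simp add: power2_eq_square)
  also have "\<dots> \<le> e * t" using True assms unfolding e_def by (intro mult_right_mono) auto
  finally have "s * ln t - (a * t - K * t\<^sup>2) \<le> s * ln t - (a - e) * t"
    by (simp add: algebra_simps)
  also have "\<dots> \<le> s * ln (s / (a - e)) - s" using e assms by (intro mult_ln_sub_linear_le) auto
  also have "\<dots> \<le> s * ln (s / a) + 2 * s * (a - (a - e)) / a - s"
    using mult_ln_div_le_add[of s a "a - e"] e assms by simp
  also have "2 * s * (a - (a - e)) / a = 16 * K / a\<^sup>2 * s\<^sup>2"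
    by (simp add: e_def power2_eq_square)
  finally show ?thesis by linarith
next
  case False
  hence "8 * s / a < t" using assms(4) by (meson mult_left_mono not_le)
  hence "8 * s \<le> a * t" using assms by (simp add: pos_divide_less_eq mult.commute)
  have "K * t\<^sup>2 = K * t * t" by (simp add: power2_eq_square)
  also have "\<dots> \<le> a / 2 * t" using assms by (intro mult_right_mono) auto
  finally have "s * ln t - (a * t - K * t\<^sup>2) \<le> s * ln t - a / 2 * t" by simp
  also have "\<dots> \<le> s * ln (s / a) - s"
    using \<open>8 * s \<le> a * t\<close> assms by (intro mult_ln_sub_half_linear_le)
  moreover have "0 \<le> 16 * K / a\<^sup>2 * s\<^sup>2" using assms by simp
  ultimately show ?thesis by linarith
qed

locale log_legendre_regular =
  fixes F :: "real \<Rightarrow> real" and a0 a1 \<beta> C :: real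
  assumes expansion: "linear_approx F a0 a1"
    and slope_pos: "0 < a1"
    and mono: "\<And>s t. 0 \<le> s \<Longrightarrow> s \<le> t \<Longrightarrow> F s \<le> F t"
    and growth_pos: "0 < \<beta>"
    and growth: "\<And>t. 1 \<le> t \<Longrightarrow> \<beta> * ln t - C \<le> F t"
begin

lemma far_bound:
  assumes "0 < d" "d \<le> t" "0 \<le> s" "s \<le> \<beta>"
  shows "s * ln t - F t \<le> - F d + s / \<beta> * (\<bar>C\<bar> + \<bar>F d\<bar>)"
proof (cases "t \<le> 1")
  case True
  have "s * ln t \<le> 0" using assms True by (simp add: mult_nonneg_nonpos)
  moreover have "F d \<le> F t" using assms by (intro mono) auto
  moreover have "0 \<le> s / \<beta> * (\<bar>C\<bar> + \<bar>F d\<bar>)" using assms growth_pos by simp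
  ultimately show ?thesis by linarith
next
  case False
  define w where "w = s / \<beta>"
  have w01: "0 \<le> w" "w \<le> 1" using assms growth_pos by (auto simp: w_def)
  have "s * ln t = w * (\<beta> * ln t)" using growth_pos by (simp add: w_def)
  also have "\<dots> \<le> w * (F t + C)" using growth[of t] False w01 by (intro mult_left_mono) auto
  finally have "s * ln t - F t \<le> w * C - (1 - w) * F t" by (simp add: algebra_simps)
  also have "\<dots> \<le> w * C - (1 - w) * F d"
    using w01 assms mono[of d t] by (simp add: mult_left_mono)
  also have "\<dots> = - F d + w * (C + F d)" by (simp add: algebra_simps)
  also have "\<dots> \<le> - F d + w * (\<bar>C\<bar> + \<bar>F d\<bar>)" using w01 by (intro add_left_mono mult_left_mono) auto
  finally show ?thesis by (simp add: w_def)
qed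

lemma log_legendre_0: "log_legendre F 0 = - a0"
proof -
  obtain K where K: "0 \<le> K" "\<And>t. 0 \<le> t \<Longrightarrow> t \<le> 1 \<Longrightarrow> \<bar>F t - a0 - a1 * t\<bar> \<le> K * t\<^sup>2"
    using linear_approx_bound[OF expansion] by auto
  have F0: "F 0 = a0" by (rule linear_approx_at_0[OF expansion])
  have upper: "0 * ln t - F t \<le> - a0" if "0 < t" for t
    using mono[of 0 t] that F0 by simp
  have lower: "- a0 - (\<bar>a1\<bar> + K) * t \<le> log_legendre F 0" if "0 < t" "t \<le> 1" for t
  proof -
    have "\<bar>F t - a0\<bar> \<le> (\<bar>a1\<bar> + K) * t"
      using K that by (intro abs_diff_le_of_quadratic_remainder) auto
    hence "- a0 - (\<bar>a1\<bar> + K) * t \<le> 0 * ln t - F t" by (simp add: abs_le_iff)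
    thus ?thesis using log_legendre_bounds(1)[OF upper \<open>0 < t\<close>] by blast
  qed
  have "((\<lambda>t. - a0 - (\<bar>a1\<bar> + K) * t) \<longlongrightarrow> - a0) (at_right 0)"
    by (auto intro!: tendsto_eq_intros)
  moreover have "\<forall>\<^sub>F t in at_right 0. - a0 - (\<bar>a1\<bar> + K) * t \<le> log_legendre F 0"
    by (rule eventually_mono[OF eventually_at_right_real[OF zero_less_one]]) (auto intro: lower)
  ultimately have "- a0 \<le> log_legendre F 0"
    by (rule tendsto_le[OF trivial_limit_at_right_real tendsto_const])
  moreover have "log_legendre F 0 \<le> - a0"
    using log_legendre_bounds(2)[OF upper zero_less_one order_refl] by blast
  ultimately show ?thesis by linarith
qed

lemma near_bound:
  assumes K: "0 \<le> K" "\<And>t. 0 \<le> t \<Longrightarrow> t \<le> 1 \<Longrightarrow> \<bar>F t - a0 - a1 * t\<bar> \<le> K * t\<^sup>2"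
    and "0 < s" "0 < t" "t \<le> 1" "K * t \<le> a1 / 2" "16 * K * s \<le> a1\<^sup>2"
  shows "s * ln t - F t \<le> s * ln (s / a1) - s - a0 + 16 * K / a1\<^sup>2 * s\<^sup>2"
proof -
  have "a0 + (a1 * t - K * t\<^sup>2) \<le> F t" using K(2)[of t] assms(4,5) by (simp add: abs_le_iff)
  moreover have "s * ln t - (a1 * t - K * t\<^sup>2) \<le> s * ln (s / a1) - s + 16 * K / a1\<^sup>2 * s\<^sup>2"
    using assms slope_pos by (intro mult_ln_sub_quadratic_le) auto
  ultimately show ?thesis by linarith
qed

text \<open>Up to \<open>\<delta>\<close> the quadratic lower bound for \<open>F\<close> applies; beyond \<open>\<delta>\<close>, \<open>F\<close> exceeds \<open>a0\<close>
  by a fixed gap, which the logarithmic term \<open>s * ln t\<close> cannot make up for small \<open>s\<close>.\<close>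
lemma log_legendre_upper:
  assumes K: "0 \<le> K" "\<And>t. 0 \<le> t \<Longrightarrow> t \<le> 1 \<Longrightarrow> \<bar>F t - a0 - a1 * t\<bar> \<le> K * t\<^sup>2"
  shows "\<forall>\<^sub>F s in at_right 0. \<forall>t>0.
           s * ln t - F t \<le> s * ln (s / a1) - s - a0 + 16 * K / a1\<^sup>2 * s\<^sup>2"
proof -
  define \<delta> where "\<delta> = min 1 (a1 / (2 * K + 1))"
  have \<delta>: "0 < \<delta>" "\<delta> \<le> 1" "K * \<delta> \<le> a1 / 2"
    using K(1) slope_pos by (auto simp: \<delta>_def min_def field_simps)
  have "K * \<delta>\<^sup>2 \<le> a1 / 2 * \<delta>"
    using \<delta> mult_right_mono[OF \<delta>(3), of \<delta>] by (simp add: power2_eq_square mult.assoc)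
  hence gap: "a0 + a1 * \<delta> / 2 \<le> F \<delta>" using K(2)[of \<delta>] \<delta> by (simp add: abs_le_iff)
  define B where "B = \<bar>C\<bar> + \<bar>F \<delta>\<bar>"
  have "((\<lambda>s. s / \<beta> * B) \<longlongrightarrow> 0 / \<beta> * B) (at_right 0)"
    using growth_pos by (intro tendsto_intros) auto
  moreover have "((\<lambda>s. s * ln (s / a1) - s) \<longlongrightarrow> 0) (at_right 0)"
    using slope_pos by real_asymp
  ultimately have "((\<lambda>s. s / \<beta> * B - (s * ln (s / a1) - s)) \<longlongrightarrow> 0) (at_right 0)"
    using tendsto_diff by fastforce
  hence "\<forall>\<^sub>F s in at_right 0. s / \<beta> * B - (s * ln (s / a1) - s) < a1 * \<delta> / 2"
    using slope_pos \<delta> by (intro order_tendstoD(2)) auto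
  moreover have "\<forall>\<^sub>F s in at_right 0. s \<in> {0<..<min \<beta> (a1\<^sup>2 / (16 * K + 1))}"
    using growth_pos slope_pos K(1) by (intro eventually_at_right_real) simp
  ultimately show ?thesis
  proof eventually_elim
    case (elim s)
    hence s: "0 < s" "s \<le> \<beta>" "16 * K * s \<le> a1\<^sup>2" using K(1) by (auto simp: field_simps)
    show ?case
    proof (intro allI impI)
      fix t :: real assume "0 < t"
      show "s * ln t - F t \<le> s * ln (s / a1) - s - a0 + 16 * K / a1\<^sup>2 * s\<^sup>2"
      proof (cases "t \<le> \<delta>")
        case True
        have "K * t \<le> a1 / 2" using \<delta>(3) K(1) True by (meson mult_left_mono order_trans)
        thus ?thesis using K s \<open>0 < t\<close> True \<delta> by (intro near_bound) auto
      next
        case False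
        have "s * ln t - F t \<le> - F \<delta> + s / \<beta> * B"
          unfolding B_def using False s \<delta> by (intro far_bound) auto
        moreover have "0 \<le> 16 * K / a1\<^sup>2 * s\<^sup>2" using K(1) by simp
        ultimately show ?thesis using gap elim(1) by linarith
      qed
    qed
  qed
qed

lemma log_legendre_asymp:
  "(\<lambda>s. log_legendre F s - (s * ln (s / a1) - s - a0)) \<in> O[at_right 0](\<lambda>s. s\<^sup>2)"
proof -
  obtain K where K: "0 \<le> K" "\<And>t. 0 \<le> t \<Longrightarrow> t \<le> 1 \<Longrightarrow> \<bar>F t - a0 - a1 * t\<bar> \<le> K * t\<^sup>2"
    using linear_approx_bound[OF expansion] by auto
  define M where "M = 16 * K / a1\<^sup>2"
  have near_max: "s * ln (s / a1) - s - a0 - M * s\<^sup>2 \<le> s * ln (s / a1) - F (s / a1)"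
    if "0 < s" "s \<le> a1" for s
  proof -
    have "F (s / a1) \<le> a0 + a1 * (s / a1) + K * (s / a1)\<^sup>2"
      using K(2)[of "s / a1"] that slope_pos by (simp add: abs_le_iff)
    also have "\<dots> = a0 + s + K / a1\<^sup>2 * s\<^sup>2" using slope_pos by (simp add: power_divide)
    also have "\<dots> \<le> a0 + s + M * s\<^sup>2"
      using K(1) slope_pos by (simp add: M_def divide_right_mono)
    finally show ?thesis by simp
  qed
  show ?thesis
  proof (rule bigoI[where c = M])
    have "\<forall>\<^sub>F s in at_right 0. s \<in> {0<..<a1}"
      using slope_pos by (rule eventually_at_right_real)
    moreover have "\<forall>\<^sub>F s in at_right 0. \<forall>t>0.
        s * ln t - F t \<le> s * ln (s / a1) - s - a0 + M * s\<^sup>2"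
      unfolding M_def using K by (intro log_legendre_upper)
    ultimately show "\<forall>\<^sub>F s in at_right 0.
        norm (log_legendre F s - (s * ln (s / a1) - s - a0)) \<le> M * norm (s\<^sup>2)"
    proof eventually_elim
      case (elim s)
      have upper: "\<And>t. 0 < t \<Longrightarrow> s * ln t - F t \<le> s * ln (s / a1) - s - a0 + M * s\<^sup>2"
        using elim(2) by blast
      have "0 < s / a1" using elim(1) slope_pos by simp
      moreover have "s * ln (s / a1) - s - a0 - M * s\<^sup>2 \<le> s * ln (s / a1) - F (s / a1)"
        using elim(1) by (intro near_max) auto
      ultimately have "s * ln (s / a1) - s - a0 - M * s\<^sup>2 \<le> log_legendre F s"
        "log_legendre F s \<le> s * ln (s / a1) - s - a0 + M * s\<^sup>2"
        using log_legendre_bounds[OF upper] by blast+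
      thus ?case by (simp add: abs_le_iff)
    qed
  qed
qed

lemma log_legendre_asymp_rescaled:
  assumes "0 < c"
  shows "(\<lambda>\<eta>. log_legendre F (c * \<eta>) - (c * \<eta> * ln (c * \<eta> / a1) - c * \<eta> - a0))
           \<in> O[at_right 0](\<lambda>\<eta>. \<eta>\<^sup>2)"
proof -
  have "filterlim (\<lambda>\<eta>. c * \<eta>) (at_right 0) (at_right 0)" using assms by real_asymp
  from landau_o.big.compose[OF log_legendre_asymp this]
  have "(\<lambda>\<eta>. log_legendre F (c * \<eta>) - (c * \<eta> * ln (c * \<eta> / a1) - c * \<eta> - a0))
          \<in> O[at_right 0](\<lambda>\<eta>. (c * \<eta>)\<^sup>2)" .
  also have "(\<lambda>\<eta>. (c * \<eta>)\<^sup>2) \<in> O[at_right 0](\<lambda>\<eta>. \<eta>\<^sup>2)"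
    using assms by (simp add: power_mult_distrib)
  finally show ?thesis .
qed

end

section \<open>The iterates of \<open>Psi\<close>\<close>

lemma exp_phi: "exp (phi \<xi>) = Psi (exp \<xi>)"
proof -
  have "exp (phi \<xi>) = exp (\<xi> / 4) * cosh (\<xi> / 4)"
    unfolding phi_def by (simp add: exp_add cosh_real_pos)
  also have "\<dots> = (exp (\<xi> / 4) * exp (\<xi> / 4) + exp (\<xi> / 4) * exp (- (\<xi> / 4))) / 2"
    by (simp add: cosh_field_def field_simps)
  also have "\<dots> = (exp (\<xi> / 2) + 1) / 2"
    by (simp add: exp_add[symmetric] exp_minus_inverse)
  also have "exp (\<xi> / 2) = sqrt ((exp (\<xi> / 2))\<^sup>2)" by simp
  also have "(exp (\<xi> / 2))\<^sup>2 = exp \<xi>" by (simp add: power2_eq_square exp_add[symmetric])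
  finally show ?thesis unfolding Psi_def .
qed

lemma phi_iter_eq_ln_Psi_iter: "(phi ^^ r) \<xi> = ln ((Psi ^^ r) (exp \<xi>))"
proof -
  have "exp ((phi ^^ r) \<xi>) = (Psi ^^ r) (exp \<xi>)"
    by (induction r) (simp_all add: exp_phi)
  thus ?thesis by (metis ln_exp)
qed

lemma Psi_iter_Suc: "(Psi ^^ Suc k) x = (sqrt ((Psi ^^ k) x) + 1) / 2"
  by (simp add: Psi_def)

lemma Psi_iter_nonneg: "0 \<le> x \<Longrightarrow> 0 \<le> (Psi ^^ k) x"
  by (induction k) (simp_all add: Psi_def)

lemma Psi_iter_ge_half: "0 \<le> x \<Longrightarrow> 1 / 2 \<le> (Psi ^^ Suc k) x"
  using Psi_iter_nonneg[of x k] by (simp add: Psi_def)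

lemma Psi_iter_mono: "0 \<le> x \<Longrightarrow> x \<le> y \<Longrightarrow> (Psi ^^ k) x \<le> (Psi ^^ k) y"
  by (induction k) (auto simp: Psi_def)

lemma ln_Psi_iter_square_ge:
  assumes "1 \<le> t"
  shows "2 * ln t / 2 ^ k - ln 4 \<le> ln ((Psi ^^ k) (t\<^sup>2))"
proof (induction k)
  case 0
  show ?case using assms by (simp add: ln_realpow)
next
  case (Suc k)
  have pos: "0 < (Psi ^^ k) (t\<^sup>2)"
  proof (cases k)
    case (Suc m)
    have "1 / 2 \<le> (Psi ^^ Suc m) (t\<^sup>2)" by (rule Psi_iter_ge_half) simp
    thus ?thesis unfolding Suc by linarith
  qed (use assms in simp)
  have "ln ((Psi ^^ k) (t\<^sup>2)) / 2 - ln 2 = ln (sqrt ((Psi ^^ k) (t\<^sup>2)) / 2)"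
    using pos by (simp add: ln_div ln_sqrt)
  also have "\<dots> \<le> ln ((Psi ^^ Suc k) (t\<^sup>2))"
    using pos by (subst Psi_iter_Suc) (intro ln_mono, auto)
  finally have "ln ((Psi ^^ k) (t\<^sup>2)) / 2 - ln 2 \<le> ln ((Psi ^^ Suc k) (t\<^sup>2))" .
  moreover have "2 * ln t / 2 ^ Suc k = (2 * ln t / 2 ^ k) / 2" by simp
  moreover have "ln (4::real) = 2 * ln 2" using ln_realpow[of 2 2] by simp
  ultimately show ?case using Suc by argo
qed

lemma prod_Psi_iter_pos: "0 < (\<Prod>j=1..k. (Psi ^^ j) 0)"
proof (rule prod_pos)
  fix j assume "j \<in> {1..k}"
  then obtain i where j: "j = Suc i" by (cases j) auto
  have "1 / 2 \<le> (Psi ^^ j) 0" unfolding j by (rule Psi_iter_ge_half) simp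
  thus "0 < (Psi ^^ j) 0" by linarith
qed

text \<open>The slope at \<open>t = 0\<close> of \<open>t \<mapsto> (Psi ^^ Suc k) (t\<^sup>2)\<close>.\<close>
definition Psi_slope :: "nat \<Rightarrow> real" where
  "Psi_slope k = 1 / (2 * 4 ^ k * sqrt (\<Prod>j=1..k. (Psi ^^ j) 0))"

lemma Psi_slope_Suc: "Psi_slope (Suc k) = Psi_slope k / (4 * sqrt ((Psi ^^ Suc k) 0))"
  by (simp add: Psi_slope_def prod.nat_ivl_Suc' real_sqrt_mult)

lemma linear_approx_Psi_iter_square:
  "linear_approx (\<lambda>t. (Psi ^^ Suc k) (t\<^sup>2)) ((Psi ^^ Suc k) 0) (Psi_slope k)"
proof (induction k)
  case 0
  show ?case by (rule linear_approxI[of _ _ _ 0]) (simp add: Psi_def Psi_slope_def field_simps)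
next
  case (Suc k)
  define c where "c = (Psi ^^ Suc k) 0"
  have c: "1 / 2 \<le> c" unfolding c_def by (rule Psi_iter_ge_half) simp
  have "linear_approx (\<lambda>t. sqrt ((Psi ^^ Suc k) (t\<^sup>2))) (sqrt c) (Psi_slope k / (2 * sqrt c))"
    using Suc c unfolding c_def by (intro linear_approx_sqrt Psi_iter_nonneg) auto
  from linear_approx_affine[OF this, of "1 / 2" "1 / 2" 0]
  have "linear_approx (\<lambda>t. (Psi ^^ Suc (Suc k)) (t\<^sup>2)) ((Psi ^^ Suc (Suc k)) 0)
          (Psi_slope k / (4 * sqrt c))"
    by (simp only: Psi_iter_Suc[of "Suc k"]) (simp add: add_divide_distrib c_def)
  thus ?case by (simp only: Psi_slope_Suc c_def)
qed

lemma log_legendre_regular_ln_Psi_iter: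
  "log_legendre_regular (\<lambda>t. ln ((Psi ^^ Suc k) (t\<^sup>2))) (ln ((Psi ^^ Suc k) 0))
     (Psi_slope k / (Psi ^^ Suc k) 0) (2 / 2 ^ Suc k) (ln 4)"
proof
  have c: "1 / 2 \<le> (Psi ^^ Suc k) 0" by (rule Psi_iter_ge_half) simp
  show "linear_approx (\<lambda>t. ln ((Psi ^^ Suc k) (t\<^sup>2))) (ln ((Psi ^^ Suc k) 0))
          (Psi_slope k / (Psi ^^ Suc k) 0)"
    using c by (intro linear_approx_ln linear_approx_Psi_iter_square Psi_iter_mono) auto
  show "0 < Psi_slope k / (Psi ^^ Suc k) 0"
    using c prod_Psi_iter_pos[of k] by (simp add: Psi_slope_def)
  show "ln ((Psi ^^ Suc k) (s\<^sup>2)) \<le> ln ((Psi ^^ Suc k) (t\<^sup>2))" if "0 \<le> s" "s \<le> t" for s t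
    using that Psi_iter_ge_half[of "s\<^sup>2" k] by (intro ln_mono Psi_iter_mono power_mono) auto
  show "(0::real) < 2 / 2 ^ Suc k" by simp
  show "2 / 2 ^ Suc k * ln t - ln 4 \<le> ln ((Psi ^^ Suc k) (t\<^sup>2))" if "1 \<le> t" for t
    using ln_Psi_iter_square_ge[OF that, of "Suc k"] by simp
qed

lemma Psi_slope_scale:
  "2 * \<eta> / (Psi_slope k / (Psi ^^ Suc k) 0)
     = 4 ^ Suc k * \<eta> * sqrt ((Psi ^^ Suc k) 0 * (\<Prod>j=1..Suc k. (Psi ^^ j) 0))"
proof -
  define c P where "c = (Psi ^^ Suc k) 0" and "P = (\<Prod>j=1..k. (Psi ^^ j) 0)"
  have c: "0 < c" using Psi_iter_ge_half[of 0 k] unfolding c_def by linarith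
  have P: "0 < P" unfolding P_def by (rule prod_Psi_iter_pos)
  have prod: "(\<Prod>j=1..Suc k. (Psi ^^ j) 0) = c * P"
    unfolding c_def P_def by (simp add: prod.nat_ivl_Suc' mult.commute)
  have sqrt: "sqrt (c * (c * P)) = c * sqrt P" using c by (simp add: real_sqrt_mult)
  have slope: "Psi_slope k = 1 / (2 * 4 ^ k * sqrt P)" unfolding Psi_slope_def P_def ..
  show ?thesis unfolding c_def[symmetric] prod sqrt slope using c P by (simp add: field_simps)
qed

lemma I_eq_log_legendre_Psi_iter: "I r y = log_legendre (\<lambda>t. ln ((Psi ^^ r) (t\<^sup>2))) (2 * y)"
proof -
  have range: "UNIV = (\<lambda>t. 2 * ln t) ` ({0<..} :: real set)"
  proof -
    have "\<xi> \<in> (\<lambda>t. 2 * ln t) ` {0<..}" for \<xi> :: real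
      by (rule image_eqI[of _ _ "exp (\<xi> / 2)"]) auto
    thus ?thesis by blast
  qed
  have "I r y = (SUP t\<in>{0<..}. y * (2 * ln t) - (phi ^^ r) (2 * ln t))"
    unfolding I_def by (subst range) (simp add: image_image)
  also have "\<dots> = log_legendre (\<lambda>t. ln ((Psi ^^ r) (t\<^sup>2))) (2 * y)"
    unfolding log_legendre_def phi_iter_eq_ln_Psi_iter
    by (intro SUP_cong) (auto simp: exp_of_nat_mult[of 2, simplified])
  finally show ?thesis .
qed

section \<open>The dual iteration\<close>

text \<open>\<open>Psi_dual r u = u * (Psi ^^ r) (1 / u ^ 2 ^ r)\<close> for \<open>u > 0\<close> (lemma \<open>Psi_dual_eq\<close>),
  and the recursion extends it continuously to \<open>u = 0\<close>.\<close>
fun Psi_dual :: "nat \<Rightarrow> real \<Rightarrow> real" where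
  "Psi_dual 0 u = 1"
| "Psi_dual (Suc k) u = (sqrt (Psi_dual k (u\<^sup>2)) + u) / 2"

lemma Psi_dual_pos: "0 \<le> u \<Longrightarrow> 0 < Psi_dual k u"
  by (induction k arbitrary: u) (auto intro: add_pos_nonneg)

lemma Psi_dual_mono: "0 \<le> u \<Longrightarrow> u \<le> v \<Longrightarrow> Psi_dual k u \<le> Psi_dual k v"
proof (induction k arbitrary: u v)
  case (Suc k)
  have "Psi_dual k (u\<^sup>2) \<le> Psi_dual k (v\<^sup>2)" using Suc by (intro Suc.IH power_mono) auto
  thus ?case using Suc.prems by (simp add: add_mono divide_right_mono)
qed simp

lemma Psi_dual_ge: "0 \<le> u \<Longrightarrow> u / 2 \<le> Psi_dual (Suc k) u"
  using Psi_dual_pos[of "u\<^sup>2" k] by simp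

lemma Psi_dual_eq: "0 < u \<Longrightarrow> Psi_dual k u = u * (Psi ^^ k) (1 / u ^ 2 ^ k)"
proof (induction k arbitrary: u)
  case (Suc k)
  have "(u\<^sup>2) ^ 2 ^ k = u ^ 2 ^ Suc k" by (simp add: power_mult[symmetric] mult.commute)
  hence "Psi_dual k (u\<^sup>2) = u\<^sup>2 * (Psi ^^ k) (1 / u ^ 2 ^ Suc k)" using Suc by simp
  hence "sqrt (Psi_dual k (u\<^sup>2)) = u * sqrt ((Psi ^^ k) (1 / u ^ 2 ^ Suc k))"
    using Suc.prems by (simp add: real_sqrt_mult)
  thus ?case by (simp only: Psi_dual.simps Psi_iter_Suc) (simp add: field_simps)
qed simp

lemma Psi_dual_zero: "Psi_dual k 0 = 2 powr (- (2 - 2 powr (1 - real k)))"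
proof (induction k)
  case (Suc k)
  have "Psi_dual (Suc k) 0 = sqrt (2 powr (- (2 - 2 powr (1 - real k)))) / 2" using Suc by simp
  also have "sqrt (2 powr (- (2 - 2 powr (1 - real k)))) = 2 powr (- (2 - 2 powr (1 - real k)) / 2)"
    by (simp add: powr_half_sqrt[symmetric] powr_powr)
  also have "\<dots> / 2 = 2 powr (- (2 - 2 powr (1 - real k)) / 2 - 1)"
    by (simp add: powr_diff)
  also have "- (2 - 2 powr (1 - real k)) / 2 - 1 = - (2 - 2 powr (1 - real (Suc k)))"
    by (simp add: powr_diff powr_minus_divide field_simps)
  finally show ?case .
qed simp

lemma linear_approx_Psi_dual_Suc:
  assumes "linear_approx (Psi_dual k) (Psi_dual k 0) d"
  shows "linear_approx (Psi_dual (Suc k)) (Psi_dual (Suc k) 0) (1 / 2)"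
proof -
  have "linear_approx (\<lambda>u. sqrt (Psi_dual k (u\<^sup>2))) (sqrt (Psi_dual k 0))
          (0 / (2 * sqrt (Psi_dual k 0)))"
    using assms Psi_dual_pos
    by (intro linear_approx_sqrt linear_approx_square_arg) (auto intro: less_imp_le)
  from linear_approx_affine[OF this, of "1 / 2" 0 "1 / 2"]
  have "linear_approx (\<lambda>u. 1 / 2 * sqrt (Psi_dual k (u\<^sup>2)) + 0 + 1 / 2 * u)
          (Psi_dual (Suc k) 0) (1 / 2)"
    by simp
  moreover have "(\<lambda>u. 1 / 2 * sqrt (Psi_dual k (u\<^sup>2)) + 0 + 1 / 2 * u) = Psi_dual (Suc k)"
    by (auto simp: add_divide_distrib)
  ultimately show ?thesis by simp
qed

lemma linear_approx_Psi_dual: "linear_approx (Psi_dual (Suc k)) (Psi_dual (Suc k) 0) (1 / 2)"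
proof (induction k)
  case 0
  have "linear_approx (Psi_dual 0) (Psi_dual 0 0) 0" by (rule linear_approxI[of _ _ _ 0]) simp
  thus ?case by (rule linear_approx_Psi_dual_Suc)
qed (rule linear_approx_Psi_dual_Suc)

lemma log_legendre_regular_ln_Psi_dual:
  "log_legendre_regular (\<lambda>u. ln (Psi_dual (Suc k) u)) (ln (Psi_dual (Suc k) 0))
     (1 / 2 / Psi_dual (Suc k) 0) 1 (ln 2)"
proof
  have c: "0 < Psi_dual (Suc k) 0" by (rule Psi_dual_pos) simp
  show "linear_approx (\<lambda>u. ln (Psi_dual (Suc k) u)) (ln (Psi_dual (Suc k) 0))
          (1 / 2 / Psi_dual (Suc k) 0)"
    using c by (intro linear_approx_ln linear_approx_Psi_dual Psi_dual_mono) auto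
  show "0 < 1 / 2 / Psi_dual (Suc k) 0" using c by simp
  show "ln (Psi_dual (Suc k) s) \<le> ln (Psi_dual (Suc k) t)" if "0 \<le> s" "s \<le> t" for s t
    using that Psi_dual_pos[of s "Suc k"] by (intro ln_mono Psi_dual_mono) auto
  show "(0::real) < 1" by simp
  show "1 * ln u - ln 2 \<le> ln (Psi_dual (Suc k) u)" if "1 \<le> u" for u
  proof -
    have "ln (u / 2) \<le> ln (Psi_dual (Suc k) u)"
      using that Psi_dual_ge[of u k] by (intro ln_mono) auto
    thus ?thesis using that by (simp add: ln_div)
  qed
qed

lemma Psi_dual_scale:
  "2 ^ r * \<eta> / (1 / 2 / Psi_dual r 0) = 2 powr (real r - 1 + 2 powr (1 - real r)) * \<eta>"
proof -
  define e where "e = 2 powr (1 - real r)"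
  have "(2::real) ^ r * 2 * Psi_dual r 0 = 2 powr real r * 2 powr 1 * 2 powr (- (2 - e))"
    unfolding Psi_dual_zero e_def by (simp add: powr_realpow)
  also have "\<dots> = 2 powr (real r + 1 + - (2 - e))" by (simp only: powr_add)
  also have "real r + 1 + - (2 - e) = real r - 1 + e" by simp
  finally show ?thesis unfolding e_def by simp
qed

lemma ln_Psi_dual_zero: "ln (Psi_dual r 0) = - ((2 - 2 powr (1 - real r)) * ln 2)"
  unfolding Psi_dual_zero by (simp add: ln_powr algebra_simps)

lemma I_eq_log_legendre_Psi_dual: "I r y = log_legendre (\<lambda>u. ln (Psi_dual r u)) (1 - 2 ^ r * y)"
proof -
  have range: "UNIV = (\<lambda>u. - (2 ^ r * ln u)) ` ({0<..} :: real set)"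
  proof -
    have "\<xi> \<in> (\<lambda>u. - (2 ^ r * ln u)) ` {0<..}" for \<xi> :: real
      by (rule image_eqI[of _ _ "exp (- \<xi> / 2 ^ r)"]) auto
    thus ?thesis by blast
  qed
  have summand: "y * - (2 ^ r * ln u) - (phi ^^ r) (- (2 ^ r * ln u))
      = (1 - 2 ^ r * y) * ln u - ln (Psi_dual r u)" if "0 < u" for u
  proof -
    have "exp (- (2 ^ r * ln u)) = 1 / u ^ 2 ^ r"
      using that exp_of_nat_mult[of "2 ^ r" "ln u"] by (simp add: exp_minus inverse_eq_divide)
    moreover have "0 < (Psi ^^ r) (1 / u ^ 2 ^ r)"
      using that Psi_dual_pos[of u r] by (simp add: Psi_dual_eq zero_less_mult_iff)
    ultimately show ?thesis
      using that by (simp add: phi_iter_eq_ln_Psi_iter Psi_dual_eq ln_mult algebra_simps)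
  qed
  have "I r y = (SUP u\<in>{0<..}. y * - (2 ^ r * ln u) - (phi ^^ r) (- (2 ^ r * ln u)))"
    unfolding I_def by (subst range) (simp only: image_image)
  also have "\<dots> = log_legendre (\<lambda>u. ln (Psi_dual r u)) (1 - 2 ^ r * y)"
    unfolding log_legendre_def using summand by (intro SUP_cong) auto
  finally show ?thesis .
qed

theorem theorem4p5:
  fixes r :: nat
  assumes "r \<ge> 1"
  shows "(\<lambda>\<eta>. I r \<eta> -
            (2 * \<eta> * ln (4 ^ r * \<eta> * sqrt ((Psi ^^ r) 0 * (\<Prod>k=1..r. (Psi ^^ k) 0)))
             - ln ((Psi ^^ r) 0) - 2 * \<eta>))
           \<in> O[at_right 0](\<lambda>\<eta>. \<eta> ^ 2) \<and>
         (\<lambda>\<eta>. I r (1 / 2 ^ r - \<eta>) -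
            (2 ^ r * \<eta> * ln (2 powr (real r - 1 + 2 powr (1 - real r)) * \<eta>)
             + (2 - 2 powr (1 - real r)) * ln 2 - 2 ^ r * \<eta>))
           \<in> O[at_right 0](\<lambda>\<eta>. \<eta> ^ 2) \<and>
         I r 0 = - ln ((Psi ^^ r) 0) \<and>
         I r (1 / 2 ^ r) = (2 - 2 powr (1 - real r)) * ln 2"
proof -
  obtain k where r: "r = Suc k" using assms by (cases r) auto
  interpret P: log_legendre_regular "\<lambda>t. ln ((Psi ^^ r) (t\<^sup>2))" "ln ((Psi ^^ r) 0)"
      "Psi_slope k / (Psi ^^ r) 0" "2 / 2 ^ r" "ln 4"
    unfolding r by (rule log_legendre_regular_ln_Psi_iter)
  interpret D: log_legendre_regular "\<lambda>u. ln (Psi_dual r u)" "ln (Psi_dual r 0)"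
      "1 / 2 / Psi_dual r 0" 1 "ln 2"
    unfolding r by (rule log_legendre_regular_ln_Psi_dual)
  have dual_arg: "1 - 2 ^ r * (1 / 2 ^ r - \<eta>) = 2 ^ r * (\<eta>::real)" for \<eta>
    by (simp add: algebra_simps)
  show ?thesis
  proof (intro conjI, goal_cases)
    case 1
    show ?case using P.log_legendre_asymp_rescaled[of 2]
      by (simp only: I_eq_log_legendre_Psi_iter r Psi_slope_scale) (simp add: algebra_simps)
  next
    case 2
    show ?case using D.log_legendre_asymp_rescaled[of "2 ^ r"]
      by (simp only: I_eq_log_legendre_Psi_dual dual_arg Psi_dual_scale ln_Psi_dual_zero)
        (simp add: algebra_simps)
  next
    case 3
    show ?case using P.log_legendre_0 by (simp add: I_eq_log_legendre_Psi_iter)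
  next
    case 4
    show ?case using D.log_legendre_0 by (simp add: I_eq_log_legendre_Psi_dual ln_Psi_dual_zero)
  qed
qed

end
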